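(* Let $(K,d)$ be a compact metric space, let $\gamma=(\gamma_1,\dots,\gamma_n)$ be a system of proper contractions on $K$ with $K=\bigcup_{i=1}^n\gamma_i(K)$, and let $\varphi:K\to K$ be continuous with $\varphi(\gamma_i(x))=x$ for all $x\in K$ and all $i$. Assume $\gamma$ satisfies the open set condition and the measure separation condition in $K$. Let $a\in J(X)^0$ and let $\xi_1,\dots,\xi_m,\eta_1,\dots,\eta_m\in X=C(K)$ satisfy $\sum_{i=1}^m\theta_{\xi_i,\eta_i}=\phi(a)$. Then, as operators on $L^2(K,\mathcal B(K),\mu^H)$, \[\sum_{i=1}^m M_{\xi_i}C_\varphi C_\varphi^*M_{\eta_i}^*=M_a.\]
   Context: A continuous map $g:K\to K$ is a proper contraction if there are $0<c_1\le c_2<1$ with $c_1d(x,y)\le d(g(x),g(y))\le c_2d(x,y)$ for all $x,y$. Open set condition: there is a non-empty open $V\subset K$ with $\bigcup_i\gamma_i(V)\subset V$ and $\gamma_i(V)\cap\gamma_j(V)=\emptyset$ for $i\ne j$. For positive reals $p_1,\dots,p_n$ with $\sum p_i=1$, the self-similar measure is the unique Borel probability measure $\mu$ on $K$ with $\mu(E)=\sum_ip_i\mu(\gamma_i^{-1}(E))$ for all Borel $E$; the Hutchinson measure $\mu^H$ is the one with all $p_i=1/n$. Measure separation condition: $\mu(\gamma_i(K)\cap\gamma_j(K))=0$ for every self-similar measure $\mu$ and all $i\neq j$. $M_a$ denotes multiplication by $a$ on $L^2(K,\mathcal B(K),\mu^H)$, and $C_\varphi f=f\circ\varphi$ is the composition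 operator on $L^2(K,\mathcal B(K),\mu^H)$ (bounded under these assumptions). $B_\gamma=\{y\in K:y=\gamma_i(x)=\gamma_j(x)$ for some $x\in K$, $i\ne j\}$. $A=C(K)$, and $X=C(K)$ is the Hilbert bimodule over $A$ with $(a\cdot\xi\cdot b)(x)=a(x)\xi(x)b(\varphi(x))$, inner product $\langle\xi,\eta\rangle_A(x)=\frac1n\sum_{i=1}^n\overline{\xi(\gamma_i(x))}\eta(\gamma_i(x))$, left action $(\phi(a)\xi)(x)=a(x)\xi(x)$; $\theta_{\xi,\eta}(\zeta)=\xi\cdot\langle\eta,\zeta\rangle_A$. $J(X)^0$ is the set of $a\in A$ vanishing on $B_\gamma$ with compact support contained in $K\setminus B_\gamma$. *)

theory Defs
  imports "HOL-Probability.Probability"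
begin

definition proper_contraction :: "'a::metric_space set \<Rightarrow> ('a \<Rightarrow> 'a) \<Rightarrow> bool" where
  "proper_contraction K g \<longleftrightarrow> g ` K \<subseteq> K \<and> continuous_on K g \<and>
     (\<exists>c1 c2::real. 0 < c1 \<and> c1 \<le> c2 \<and> c2 < 1 \<and>
        (\<forall>x\<in>K. \<forall>y\<in>K. c1 * dist x y \<le> dist (g x) (g y) \<and> dist (g x) (g y) \<le> c2 * dist x y))"

definition open_set_condition :: "'a::metric_space set \<Rightarrow> nat \<Rightarrow> (nat \<Rightarrow> 'a \<Rightarrow> 'a) \<Rightarrow> bool" where
  "open_set_condition K n \<gamma> \<longleftrightarrow>
     (\<exists>V. openin (top_of_set K) V \<and> V \<noteq> {} \<and> (\<Union>i<n. \<gamma> i ` V) \<subseteq> V \<and>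
        (\<forall>i<n. \<forall>j<n. i \<noteq> j \<longrightarrow> \<gamma> i ` V \<inter> \<gamma> j ` V = {}))"

definition self_similar_measure ::
  "'a::metric_space set \<Rightarrow> nat \<Rightarrow> (nat \<Rightarrow> 'a \<Rightarrow> 'a) \<Rightarrow> (nat \<Rightarrow> real) \<Rightarrow> 'a measure \<Rightarrow> bool" where
  "self_similar_measure K n \<gamma> p \<mu> \<longleftrightarrow>
     prob_space \<mu> \<and> sets \<mu> = sets (restrict_space borel K) \<and>
     (\<forall>E\<in>sets \<mu>. measure \<mu> E = (\<Sum>i<n. p i * measure \<mu> (\<gamma> i -` E \<inter> K)))"

definition measure_separation_condition :: "'a::metric_space set \<Rightarrow> nat \<Rightarrow> (nat \<Rightarrow> 'a \<Rightarrow> 'a) \<Rightarrow> bool" where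
  "measure_separation_condition K n \<gamma> \<longleftrightarrow>
     (\<forall>p \<mu>. (\<forall>i<n. 0 < p i) \<and> (\<Sum>i<n. p i) = 1 \<and> self_similar_measure K n \<gamma> p \<mu> \<longrightarrow>
        (\<forall>i<n. \<forall>j<n. i \<noteq> j \<longrightarrow> measure \<mu> (\<gamma> i ` K \<inter> \<gamma> j ` K) = 0))"

definition hutchinson_measure :: "'a::metric_space set \<Rightarrow> nat \<Rightarrow> (nat \<Rightarrow> 'a \<Rightarrow> 'a) \<Rightarrow> 'a measure \<Rightarrow> bool" where
  "hutchinson_measure K n \<gamma> \<mu> \<longleftrightarrow> self_similar_measure K n \<gamma> (\<lambda>_. 1 / real n) \<mu>"

definition branch_set :: "'a set \<Rightarrow> nat \<Rightarrow> (nat \<Rightarrow> 'a \<Rightarrow> 'a) \<Rightarrow> 'a set" where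
  "branch_set K n \<gamma> = {y\<in>K. \<exists>x\<in>K. \<exists>i<n. \<exists>j<n. i \<noteq> j \<and> y = \<gamma> i x \<and> y = \<gamma> j x}"

definition JX0 :: "'a::metric_space set \<Rightarrow> nat \<Rightarrow> (nat \<Rightarrow> 'a \<Rightarrow> 'a) \<Rightarrow> ('a \<Rightarrow> complex) set" where
  "JX0 K n \<gamma> = {a. continuous_on K a \<and> (\<forall>y\<in>branch_set K n \<gamma>. a y = 0) \<and>
      compact (K \<inter> closure {x\<in>K. a x \<noteq> 0}) \<and>
      K \<inter> closure {x\<in>K. a x \<noteq> 0} \<subseteq> K - branch_set K n \<gamma>}"

definition bimod_inner :: "nat \<Rightarrow> (nat \<Rightarrow> 'a \<Rightarrow> 'a) \<Rightarrow> ('a \<Rightarrow> complex) \<Rightarrow> ('a \<Rightarrow> complex) \<Rightarrow> 'a \<Rightarrow> complex" where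
  "bimod_inner n \<gamma> \<xi> \<eta> x = (1 / of_nat n) * (\<Sum>i<n. cnj (\<xi> (\<gamma> i x)) * \<eta> (\<gamma> i x))"

definition right_act :: "('a \<Rightarrow> 'a) \<Rightarrow> ('a \<Rightarrow> complex) \<Rightarrow> ('a \<Rightarrow> complex) \<Rightarrow> 'a \<Rightarrow> complex" where
  "right_act \<phi> \<xi> b x = \<xi> x * b (\<phi> x)"

definition theta :: "nat \<Rightarrow> (nat \<Rightarrow> 'a \<Rightarrow> 'a) \<Rightarrow> ('a \<Rightarrow> 'a) \<Rightarrow> ('a \<Rightarrow> complex) \<Rightarrow> ('a \<Rightarrow> complex)
    \<Rightarrow> ('a \<Rightarrow> complex) \<Rightarrow> 'a \<Rightarrow> complex" where
  "theta n \<gamma> \<phi> \<xi> \<eta> \<zeta> = right_act \<phi> \<xi> (bimod_inner n \<gamma> \<eta> \<zeta>)"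

definition left_act :: "('a \<Rightarrow> complex) \<Rightarrow> ('a \<Rightarrow> complex) \<Rightarrow> 'a \<Rightarrow> complex" where
  "left_act a \<xi> x = a x * \<xi> x"

text \<open>Square-integrable complex functions (representatives of L^2 classes).\<close>
definition L2 :: "'a measure \<Rightarrow> ('a \<Rightarrow> complex) set" where
  "L2 \<mu> = {f. f \<in> borel_measurable \<mu> \<and> integrable \<mu> (\<lambda>x. (cmod (f x))\<^sup>2)}"

definition L2_inner :: "'a measure \<Rightarrow> ('a \<Rightarrow> complex) \<Rightarrow> ('a \<Rightarrow> complex) \<Rightarrow> complex" where
  "L2_inner \<mu> f g = (\<integral>x. f x * cnj (g x) \<partial>\<mu>)"

text \<open>T is (a representative of) the Hilbert space adjoint of the composition operator C_phi.\<close>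
definition is_comp_adjoint :: "'a measure \<Rightarrow> ('a \<Rightarrow> 'a) \<Rightarrow> (('a \<Rightarrow> complex) \<Rightarrow> ('a \<Rightarrow> complex)) \<Rightarrow> bool" where
  "is_comp_adjoint \<mu> \<phi> T \<longleftrightarrow>
     (\<forall>g\<in>L2 \<mu>. T g \<in> L2 \<mu>) \<and>
     (\<forall>f\<in>L2 \<mu>. \<forall>g\<in>L2 \<mu>. L2_inner \<mu> (\<lambda>x. f (\<phi> x)) g = L2_inner \<mu> f (T g))"

end

theory Submission
  imports Defs
begin

(* Because \<phi> \<circ> \<gamma>_i = id and the Hutchinson measure satisfies
   \<integral> f d\<mu> = (1/n) \<Sum>_j \<integral> f \<circ> \<gamma>_j d\<mu>, the map \<phi> preserves \<mu> and the adjoint of the composition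
   operator is the averaging operator C_\<phi>^* g = (1/n) \<Sum>_j g \<circ> \<gamma>_j (a.e.).  Consequently
   (\<Sum>_i M_\<xi>_i C_\<phi> C_\<phi>^* M_\<eta>_i^* h)(x) = \<Sum>_i \<theta>_{\<xi>_i,\<eta>_i}(h)(x) for almost every x, and the right-hand
   side only involves the values of h at x and at the finitely many points \<gamma>_j(\<phi> x).  A continuous
   \<zeta> interpolating h at these points turns the hypothesis \<Sum>_i \<theta>_{\<xi>_i,\<eta>_i} = \<phi>(a) into the value a(x) h(x). *)

lemma continuous_interpolation_finite:
  fixes P :: "'a::metric_space set" and h :: "'a \<Rightarrow> 'b::real_normed_vector"
  assumes "finite P"
  obtains \<zeta> where "continuous_on UNIV \<zeta>" and "\<And>p. p \<in> P \<Longrightarrow> \<zeta> p = h p"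
proof
  define \<zeta> where "\<zeta> = (\<lambda>y. \<Sum>q\<in>P. (\<Prod>p\<in>P-{q}. dist y p / dist q p) *\<^sub>R h q)"
  show "continuous_on UNIV \<zeta>"
    unfolding \<zeta>_def by (intro continuous_intros) auto
  fix p0 assume p0: "p0 \<in> P"
  have "(\<Prod>p\<in>P-{q}. dist p0 p / dist q p) = (if q = p0 then 1 else 0)" if "q \<in> P" for q
    using assms p0 that by (auto intro: prod_zero)
  then have "\<zeta> p0 = (\<Sum>q\<in>P. (if q = p0 then h q else 0))"
    unfolding \<zeta>_def by (intro sum.cong) auto
  then show "\<zeta> p0 = h p0"
    using assms p0 by simp
qed

lemma borel_measurable_cnj [measurable]:
  "f \<in> borel_measurable M \<Longrightarrow> (\<lambda>x. cnj (f x)) \<in> borel_measurable M"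
  by (rule borel_measurable_continuous_on) (auto intro: continuous_intros)

lemma L2_borel_measurable: "f \<in> L2 M \<Longrightarrow> f \<in> borel_measurable M"
  by (simp add: L2_def)

lemma integrable_mult_cnj_L2:
  assumes "f \<in> L2 M" "g \<in> L2 M"
  shows "integrable M (\<lambda>x. f x * cnj (g x))"
proof (rule Bochner_Integration.integrable_bound)
  show "integrable M (\<lambda>x. (cmod (f x))\<^sup>2 + (cmod (g x))\<^sup>2)"
    using assms by (auto simp: L2_def)
  show "(\<lambda>x. f x * cnj (g x)) \<in> borel_measurable M"
    using assms[THEN L2_borel_measurable] by measurable
  have "cmod (f x) * cmod (g x) \<le> (cmod (f x))\<^sup>2 + (cmod (g x))\<^sup>2" for x
  proof -
    have "0 \<le> cmod (f x) * cmod (g x)"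
      by simp
    then show ?thesis
      using sum_squares_bound[of "cmod (f x)" "cmod (g x)"] by linarith
  qed
  then show "AE x in M. norm (f x * cnj (g x)) \<le> norm ((cmod (f x))\<^sup>2 + (cmod (g x))\<^sup>2)"
    by (simp add: norm_mult)
qed

lemma L2_mult_bounded:
  assumes "g \<in> L2 M" "b \<in> borel_measurable M" "\<And>x. x \<in> space M \<Longrightarrow> cmod (b x) \<le> B"
  shows "(\<lambda>x. b x * g x) \<in> L2 M"
proof -
  have "integrable M (\<lambda>x. (cmod (b x * g x))\<^sup>2)"
  proof (rule Bochner_Integration.integrable_bound)
    show "integrable M (\<lambda>x. B\<^sup>2 * (cmod (g x))\<^sup>2)"
      using assms(1) by (simp add: L2_def)
    show "(\<lambda>x. (cmod (b x * g x))\<^sup>2) \<in> borel_measurable M"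
      using L2_borel_measurable[OF assms(1)] assms(2) by measurable
    have "(cmod (b x))\<^sup>2 \<le> B\<^sup>2" if "x \<in> space M" for x
      using assms(3)[OF that] by (intro power_mono) auto
    then show "AE x in M. norm ((cmod (b x * g x))\<^sup>2) \<le> norm (B\<^sup>2 * (cmod (g x))\<^sup>2)"
      by (intro AE_I2) (simp add: norm_mult power_mult_distrib mult_right_mono)
  qed
  moreover have "(\<lambda>x. b x * g x) \<in> borel_measurable M"
    using L2_borel_measurable[OF assms(1)] assms(2) by measurable
  ultimately show ?thesis
    by (simp add: L2_def)
qed

lemma L2_cmult: "g \<in> L2 M \<Longrightarrow> (\<lambda>x. c * g x) \<in> L2 M"
  using L2_mult_bounded[of g M "\<lambda>_. c" "cmod c"] by simp

lemma L2_add: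
  assumes "f \<in> L2 M" "g \<in> L2 M"
  shows "(\<lambda>x. f x + g x) \<in> L2 M"
proof -
  have "integrable M (\<lambda>x. (cmod (f x + g x))\<^sup>2)"
  proof (rule Bochner_Integration.integrable_bound)
    show "integrable M (\<lambda>x. 2 * (cmod (f x))\<^sup>2 + 2 * (cmod (g x))\<^sup>2)"
      using assms by (simp add: L2_def)
    show "(\<lambda>x. (cmod (f x + g x))\<^sup>2) \<in> borel_measurable M"
      using assms[THEN L2_borel_measurable] by measurable
    have "(cmod (f x + g x))\<^sup>2 \<le> 2 * (cmod (f x))\<^sup>2 + 2 * (cmod (g x))\<^sup>2" for x
    proof -
      have "(cmod (f x + g x))\<^sup>2 \<le> (cmod (f x) + cmod (g x))\<^sup>2"
        by (intro power_mono norm_triangle_ineq) simp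
      also have "\<dots> \<le> 2 * (cmod (f x))\<^sup>2 + 2 * (cmod (g x))\<^sup>2"
        using sum_squares_bound[of "cmod (f x)" "cmod (g x)"] by (simp add: power2_sum)
      finally show ?thesis .
    qed
    then show "AE x in M. norm ((cmod (f x + g x))\<^sup>2) \<le> norm (2 * (cmod (f x))\<^sup>2 + 2 * (cmod (g x))\<^sup>2)"
      by simp
  qed
  moreover have "(\<lambda>x. f x + g x) \<in> borel_measurable M"
    using assms[THEN L2_borel_measurable] by measurable
  ultimately show ?thesis
    by (simp add: L2_def)
qed

lemma L2_sum: "(\<And>i. i \<in> I \<Longrightarrow> g i \<in> L2 M) \<Longrightarrow> (\<lambda>x. \<Sum>i\<in>I. g i x) \<in> L2 M"
proof (induction I rule: infinite_finite_induct)
  case (insert i I)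
  then show ?case
    by (simp add: L2_add)
qed (simp_all add: L2_def)

lemma AE_eq_if_L2_inner_eq:
  assumes f: "f \<in> L2 M" and g: "g \<in> L2 M"
    and inner_eq: "\<And>u. u \<in> L2 M \<Longrightarrow> L2_inner M u f = L2_inner M u g"
  shows "AE x in M. f x = g x"
proof -
  define u where "u = (\<lambda>x. f x + (-1) * g x)"
  have u: "u \<in> L2 M"
    unfolding u_def by (intro L2_add L2_cmult f g)
  have "(\<integral>x. u x * cnj (f x) - u x * cnj (g x) \<partial>M) = 0"
    using inner_eq[OF u] integrable_mult_cnj_L2[OF u f] integrable_mult_cnj_L2[OF u g]
    by (simp add: L2_inner_def)
  then have "(\<integral>x. complex_of_real ((cmod (u x))\<^sup>2) \<partial>M) = 0"
    unfolding complex_norm_square by (simp add: u_def algebra_simps)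
  then have "(\<integral>x. (cmod (u x))\<^sup>2 \<partial>M) = 0"
    by (metis integral_complex_of_real of_real_eq_0_iff)
  then have "AE x in M. (cmod (u x))\<^sup>2 = 0"
    using u by (subst (asm) integral_nonneg_eq_0_iff_AE) (auto simp: L2_def)
  then show ?thesis
    by eventually_elim (simp add: u_def)
qed

lemma integrable_compose_preimage_le:
  fixes F :: "'a \<Rightarrow> 'b::{banach, second_countable_topology}"
  assumes T: "T \<in> M \<rightarrow>\<^sub>M M" and c: "c < \<infinity>"
    and preimage_le: "\<And>A. A \<in> sets M \<Longrightarrow> emeasure M (T -` A \<inter> space M) \<le> c * emeasure M A"
    and F: "integrable M F"
  shows "integrable M (\<lambda>x. F (T x))"
proof -
  have Fm: "F \<in> borel_measurable M"
    using F by simp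
  have "emeasure (distr M M T) A \<le> emeasure (scale_measure c M) A" for A
    by (cases "A \<in> sets M") (simp_all add: emeasure_distr[OF T] preimage_le emeasure_notin_sets)
  then have distr_le: "distr M M T \<le> scale_measure c M"
    by (simp add: le_measure_iff le_fun_def space_scale_measure)
  have "(\<integral>\<^sup>+x. norm (F (T x)) \<partial>M) = (\<integral>\<^sup>+x. norm (F x) \<partial>distr M M T)"
    using T Fm by (simp add: nn_integral_distr)
  also have "\<dots> \<le> (\<integral>\<^sup>+x. norm (F x) \<partial>scale_measure c M)"
    using distr_le by (intro nn_integral_mono_measure) simp_all
  also have "\<dots> = c * (\<integral>\<^sup>+x. norm (F x) \<partial>M)"
    using Fm by (simp add: nn_integral_scale_measure)
  also have "\<dots> < \<infinity>"
    using c F by (simp add: integrable_iff_bounded ennreal_mult_less_top)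
  finally show ?thesis
    using T Fm by (simp add: integrable_iff_bounded)
qed

lemma L2_compose_preimage_le:
  assumes "T \<in> M \<rightarrow>\<^sub>M M" "c < \<infinity>"
    and "\<And>A. A \<in> sets M \<Longrightarrow> emeasure M (T -` A \<inter> space M) \<le> c * emeasure M A"
    and "f \<in> L2 M"
  shows "(\<lambda>x. f (T x)) \<in> L2 M"
  using assms integrable_compose_preimage_le[OF assms(1-3), of "\<lambda>x. (cmod (f x))\<^sup>2"]
    measurable_compose[OF assms(1) L2_borel_measurable[OF assms(4)]]
  by (simp add: L2_def)

lemma AE_compose_distr_eq:
  assumes "T \<in> M \<rightarrow>\<^sub>M M" "distr M M T = M"
    and "AE y in M. P y" "{y \<in> space M. P y} \<in> sets M"
  shows "AE x in M. P (T x)"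
  using AE_distr_iff[OF assms(1,4)] assms(2,3) by metis

locale hutchinson_space = finite_measure \<mu> for \<mu> :: "'a measure" +
  fixes n :: nat and \<gamma> :: "nat \<Rightarrow> 'a \<Rightarrow> 'a"
  assumes n_pos: "0 < n"
    and measurable_\<gamma>: "i < n \<Longrightarrow> \<gamma> i \<in> \<mu> \<rightarrow>\<^sub>M \<mu>"
    and measure_self_similar:
      "A \<in> sets \<mu> \<Longrightarrow> measure \<mu> A = (\<Sum>i<n. measure \<mu> (\<gamma> i -` A \<inter> space \<mu>)) / n"
begin

lemma emeasure_preimage_le:
  assumes i: "i < n" and A: "A \<in> sets \<mu>"
  shows "emeasure \<mu> (\<gamma> i -` A \<inter> space \<mu>) \<le> of_nat n * emeasure \<mu> A"
proof -
  have "measure \<mu> (\<gamma> i -` A \<inter> space \<mu>) \<le> (\<Sum>j<n. measure \<mu> (\<gamma> j -` A \<inter> space \<mu>))"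
    using i by (intro member_le_sum) auto
  also have "\<dots> = n * measure \<mu> A"
    using measure_self_similar[OF A] n_pos by simp
  finally show ?thesis
    by (simp add: emeasure_eq_measure ennreal_of_nat_eq_real_of_nat ennreal_mult'[symmetric])
qed

lemma integrable_compose_\<gamma>:
  fixes F :: "'a \<Rightarrow> 'b::{banach, second_countable_topology}"
  shows "i < n \<Longrightarrow> integrable \<mu> F \<Longrightarrow> integrable \<mu> (\<lambda>x. F (\<gamma> i x))"
  by (rule integrable_compose_preimage_le[OF measurable_\<gamma> _ emeasure_preimage_le])
    (simp_all add: of_nat_less_top)

lemma L2_compose_\<gamma>: "i < n \<Longrightarrow> f \<in> L2 \<mu> \<Longrightarrow> (\<lambda>x. f (\<gamma> i x)) \<in> L2 \<mu>"
  by (rule L2_compose_preimage_le[OF measurable_\<gamma> _ emeasure_preimage_le])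
    (simp_all add: of_nat_less_top)

lemma integral_self_similar:
  fixes F :: "'a \<Rightarrow> 'b::{banach, second_countable_topology}"
  assumes "integrable \<mu> F"
  shows "integral\<^sup>L \<mu> F = (1 / n) *\<^sub>R (\<Sum>i<n. \<integral>x. F (\<gamma> i x) \<partial>\<mu>)"
  using assms
proof (induction rule: integrable_induct)
  case (base A c)
  have "(\<integral>x. indicator A (\<gamma> i x) *\<^sub>R c \<partial>\<mu>) = measure \<mu> (\<gamma> i -` A \<inter> space \<mu>) *\<^sub>R c"
    if i: "i < n" for i
  proof -
    have "(\<integral>x. indicator A (\<gamma> i x) *\<^sub>R c \<partial>\<mu>) = (\<integral>x. indicator (\<gamma> i -` A \<inter> space \<mu>) x *\<^sub>R c \<partial>\<mu>)"
      by (intro Bochner_Integration.integral_cong) (auto simp: indicator_def)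
    then show ?thesis
      using measurable_sets[OF measurable_\<gamma>[OF i] base(1)] by (simp add: emeasure_eq_measure)
  qed
  then show ?case
    using base measure_self_similar[OF base(1)]
    by (simp add: emeasure_eq_measure scaleR_sum_left[symmetric] sum_divide_distrib)
next
  case (add f g)
  then show ?case
    by (simp add: integrable_compose_\<gamma> sum.distrib scaleR_add_right)
next
  case (lim f s)
  have "(\<lambda>k. \<integral>x. s k (\<gamma> i x) \<partial>\<mu>) \<longlonglongrightarrow> (\<integral>x. f (\<gamma> i x) \<partial>\<mu>)" if i: "i < n" for i
  proof (rule integral_dominated_convergence[where w="\<lambda>x. 2 * norm (f (\<gamma> i x))"])
    show "integrable \<mu> (\<lambda>x. 2 * norm (f (\<gamma> i x)))"
      using integrable_compose_\<gamma>[OF i] lim by auto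
    show "AE x in \<mu>. (\<lambda>k. s k (\<gamma> i x)) \<longlonglongrightarrow> f (\<gamma> i x)"
      and "\<And>k. AE x in \<mu>. norm (s k (\<gamma> i x)) \<le> 2 * norm (f (\<gamma> i x))"
      using lim measurable_space[OF measurable_\<gamma>[OF i]] by auto
  qed (use lim measurable_\<gamma>[OF i] in simp_all)
  then have "(\<lambda>k. integral\<^sup>L \<mu> (s k)) \<longlonglongrightarrow> (1 / n) *\<^sub>R (\<Sum>i<n. \<integral>x. f (\<gamma> i x) \<partial>\<mu>)"
    using lim by (auto intro!: tendsto_scaleR tendsto_sum)
  moreover have "(\<lambda>k. integral\<^sup>L \<mu> (s k)) \<longlonglongrightarrow> integral\<^sup>L \<mu> f"
    by (rule integral_dominated_convergence[where w="\<lambda>x. 2 * norm (f x)"]) (use lim in auto)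
  ultimately show ?case
    using LIMSEQ_unique by blast
qed

lemma distr_left_inverse_eq:
  assumes \<phi>: "\<phi> \<in> \<mu> \<rightarrow>\<^sub>M \<mu>" and left_inverse: "\<And>i x. i < n \<Longrightarrow> x \<in> space \<mu> \<Longrightarrow> \<phi> (\<gamma> i x) = x"
  shows "distr \<mu> \<mu> \<phi> = \<mu>"
proof (rule measure_eqI)
  fix A assume "A \<in> sets (distr \<mu> \<mu> \<phi>)"
  then have A: "A \<in> sets \<mu>"
    by simp
  have "\<gamma> i -` (\<phi> -` A \<inter> space \<mu>) \<inter> space \<mu> = A" if i: "i < n" for i
    using sets.sets_into_space[OF A] measurable_space[OF measurable_\<gamma>[OF i]] left_inverse[OF i]
    by auto
  then have "measure \<mu> (\<phi> -` A \<inter> space \<mu>) = measure \<mu> A"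
    using measure_self_similar[OF measurable_sets[OF \<phi> A]] n_pos by simp
  then show "emeasure (distr \<mu> \<mu> \<phi>) A = emeasure \<mu> A"
    using A \<phi> by (simp add: emeasure_distr emeasure_eq_measure)
qed simp

lemma comp_adjoint_eq_average:
  assumes \<phi>: "\<phi> \<in> \<mu> \<rightarrow>\<^sub>M \<mu>" and left_inverse: "\<And>i x. i < n \<Longrightarrow> x \<in> space \<mu> \<Longrightarrow> \<phi> (\<gamma> i x) = x"
    and T: "is_comp_adjoint \<mu> \<phi> T" and g: "g \<in> L2 \<mu>"
  shows "AE x in \<mu>. T g x = 1 / of_nat n * (\<Sum>j<n. g (\<gamma> j x))"
proof (rule AE_eq_if_L2_inner_eq)
  show "T g \<in> L2 \<mu>"
    using T g by (simp add: is_comp_adjoint_def)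
  show "(\<lambda>x. 1 / of_nat n * (\<Sum>j<n. g (\<gamma> j x))) \<in> L2 \<mu>"
    by (intro L2_cmult L2_sum L2_compose_\<gamma> g) simp
  fix f assume f: "f \<in> L2 \<mu>"
  have "(\<lambda>x. f (\<phi> x)) \<in> L2 \<mu>"
    using distr_left_inverse_eq[OF \<phi> left_inverse] emeasure_distr[OF \<phi>]
    by (intro L2_compose_preimage_le[OF \<phi> _ _ f, of 1]) auto
  then have "L2_inner \<mu> f (T g) = (\<integral>x. f (\<phi> x) * cnj (g x) \<partial>\<mu>)"
    using T f g unfolding is_comp_adjoint_def L2_inner_def by simp
  also have "\<dots> = (1 / n) *\<^sub>R (\<Sum>j<n. \<integral>x. f (\<phi> (\<gamma> j x)) * cnj (g (\<gamma> j x)) \<partial>\<mu>)"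
    by (rule integral_self_similar[OF integrable_mult_cnj_L2[OF \<open>(\<lambda>x. f (\<phi> x)) \<in> L2 \<mu>\<close> g]])
  also have "\<dots> = (1 / n) *\<^sub>R (\<Sum>j<n. \<integral>x. f x * cnj (g (\<gamma> j x)) \<partial>\<mu>)"
    using left_inverse
    by (intro arg_cong[where f="scaleR _"] sum.cong refl Bochner_Integration.integral_cong) auto
  also have "\<dots> = (\<integral>x. 1 / of_nat n * (\<Sum>j<n. f x * cnj (g (\<gamma> j x))) \<partial>\<mu>)"
    using integrable_mult_cnj_L2[OF f L2_compose_\<gamma>[OF _ g]]
    by (simp add: integral_sum scaleR_conv_of_real)
  also have "\<dots> = L2_inner \<mu> f (\<lambda>x. 1 / of_nat n * (\<Sum>j<n. g (\<gamma> j x)))"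
    by (simp add: L2_inner_def sum_distrib_left mult.left_commute)
  finally show "L2_inner \<mu> f (T g) = L2_inner \<mu> f (\<lambda>x. 1 / of_nat n * (\<Sum>j<n. g (\<gamma> j x)))" .
qed

lemma comp_comp_adjoint_eq_average:
  assumes \<phi>: "\<phi> \<in> \<mu> \<rightarrow>\<^sub>M \<mu>" and left_inverse: "\<And>i x. i < n \<Longrightarrow> x \<in> space \<mu> \<Longrightarrow> \<phi> (\<gamma> i x) = x"
    and T: "is_comp_adjoint \<mu> \<phi> T" and g: "g \<in> L2 \<mu>"
  shows "AE x in \<mu>. T g (\<phi> x) = 1 / of_nat n * (\<Sum>j<n. g (\<gamma> j (\<phi> x)))"
proof (rule AE_compose_distr_eq[OF \<phi> distr_left_inverse_eq[OF \<phi> left_inverse]])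
  show "AE y in \<mu>. T g y = 1 / of_nat n * (\<Sum>j<n. g (\<gamma> j y))"
    by (rule comp_adjoint_eq_average[OF \<phi> left_inverse T g])
  have "T g \<in> L2 \<mu>"
    using T g by (simp add: is_comp_adjoint_def)
  moreover have "(\<lambda>y. 1 / of_nat n * (\<Sum>j<n. g (\<gamma> j y))) \<in> L2 \<mu>"
    by (intro L2_cmult L2_sum L2_compose_\<gamma> g) simp
  ultimately show "{y \<in> space \<mu>. T g y = 1 / of_nat n * (\<Sum>j<n. g (\<gamma> j y))} \<in> sets \<mu>"
    by (intro measurable_equality_set) (simp_all add: L2_borel_measurable)
qed

end

lemma measurable_continuous_self_map:
  assumes sets_eq: "sets M = sets (restrict_space borel K)"
    and "continuous_on K f" "f ` K \<subseteq> K"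
  shows "f \<in> M \<rightarrow>\<^sub>M M"
proof -
  have "f \<in> restrict_space borel K \<rightarrow>\<^sub>M restrict_space borel K"
    using assms(2,3) borel_measurable_continuous_on_restrict[OF assms(2)]
    by (intro measurable_restrict_space2) (auto simp: space_restrict_space)
  then show ?thesis
    using measurable_cong_sets[OF sets_eq sets_eq] by blast
qed

lemma L2_mult_continuous:
  assumes sets_eq: "sets M = sets (restrict_space borel K)" and "compact K"
    and b: "continuous_on K b" and g: "g \<in> L2 M"
  shows "(\<lambda>x. b x * g x) \<in> L2 M"
proof -
  obtain B where "\<And>x. x \<in> K \<Longrightarrow> cmod (b x) \<le> B"
    using compact_imp_bounded[OF compact_continuous_image[OF b \<open>compact K\<close>]]
    by (auto simp: bounded_iff)
  moreover have "b \<in> borel_measurable M"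
    using borel_measurable_continuous_on_restrict[OF b] measurable_cong_sets[OF sets_eq refl] by blast
  moreover have "space M = K"
    using sets_eq_imp_space_eq[OF sets_eq] by (simp add: space_restrict_space)
  ultimately show ?thesis
    using L2_mult_bounded[OF g] by metis
qed

lemma hutchinson_space_if_hutchinson_measure:
  assumes "hutchinson_measure K n \<gamma> \<mu>" and "0 < n"
    and "\<And>i. i < n \<Longrightarrow> continuous_on K (\<gamma> i)" and "\<And>i. i < n \<Longrightarrow> \<gamma> i ` K \<subseteq> K"
  shows "hutchinson_space \<mu> n \<gamma>"
proof -
  have prob: "prob_space \<mu>" and sets_eq: "sets \<mu> = sets (restrict_space borel K)"
    and self_similar: "\<And>A. A \<in> sets \<mu> \<Longrightarrow> measure \<mu> A = (\<Sum>i<n. 1 / real n * measure \<mu> (\<gamma> i -` A \<inter> K))"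
    using assms(1) by (auto simp: hutchinson_measure_def self_similar_measure_def)
  have "space \<mu> = K"
    using sets_eq_imp_space_eq[OF sets_eq] by (simp add: space_restrict_space)
  show ?thesis
  proof (intro hutchinson_space.intro hutchinson_space_axioms.intro)
    show "finite_measure \<mu>"
      using prob by (rule prob_space.axioms(1))
    show "\<gamma> i \<in> \<mu> \<rightarrow>\<^sub>M \<mu>" if "i < n" for i
      using measurable_continuous_self_map[OF sets_eq assms(3,4)[OF that]] .
    show "measure \<mu> A = (\<Sum>i<n. measure \<mu> (\<gamma> i -` A \<inter> space \<mu>)) / n" if "A \<in> sets \<mu>" for A
      using self_similar[OF that] \<open>space \<mu> = K\<close> by (simp add: sum_divide_distrib)
  qed fact
qed

lemma sum_theta_eq_left_act_all:
  fixes K :: "'a::metric_space set"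
  assumes theta_eq: "\<forall>\<zeta>. continuous_on K \<zeta> \<longrightarrow>
      (\<forall>x\<in>K. (\<Sum>i<m. theta n \<gamma> \<phi> (\<xi> i) (\<eta> i) \<zeta> x) = left_act a \<zeta> x)"
    and x: "x \<in> K"
  shows "(\<Sum>i<m. theta n \<gamma> \<phi> (\<xi> i) (\<eta> i) h x) = left_act a h x"
proof -
  have "finite (insert x ((\<lambda>j. \<gamma> j (\<phi> x)) ` {..<n}))"
    by simp
  then obtain \<zeta> where "continuous_on UNIV \<zeta>"
    and \<zeta>: "\<And>p. p \<in> insert x ((\<lambda>j. \<gamma> j (\<phi> x)) ` {..<n}) \<Longrightarrow> \<zeta> p = h p"
    using continuous_interpolation_finite[where h = h] by blast
  then have "(\<Sum>i<m. theta n \<gamma> \<phi> (\<xi> i) (\<eta> i) \<zeta> x) = left_act a \<zeta> x"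
    using theta_eq x continuous_on_subset by blast
  then show ?thesis
    using \<zeta> by (simp add: theta_def right_act_def bimod_inner_def left_act_def)
qed

theorem lemma4p4:
  fixes K :: "'a::metric_space set" and n :: nat and \<gamma> :: "nat \<Rightarrow> 'a \<Rightarrow> 'a"
    and \<phi> :: "'a \<Rightarrow> 'a" and \<mu> :: "'a measure"
    and a :: "'a \<Rightarrow> complex" and m :: nat and \<xi> \<eta> :: "nat \<Rightarrow> 'a \<Rightarrow> complex"
    and T :: "('a \<Rightarrow> complex) \<Rightarrow> ('a \<Rightarrow> complex)"
  assumes "compact K"
    and "\<forall>i<n. proper_contraction K (\<gamma> i)"
    and "K = (\<Union>i<n. \<gamma> i ` K)"
    and "continuous_on K \<phi>" and "\<phi> ` K \<subseteq> K"
    and "\<forall>i<n. \<forall>x\<in>K. \<phi> (\<gamma> i x) = x"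
    and "open_set_condition K n \<gamma>"
    and "measure_separation_condition K n \<gamma>"
    and "hutchinson_measure K n \<gamma> \<mu>"
    and "a \<in> JX0 K n \<gamma>"
    and "\<forall>i<m. continuous_on K (\<xi> i) \<and> continuous_on K (\<eta> i)"
    and "\<forall>\<zeta>. continuous_on K \<zeta> \<longrightarrow>
           (\<forall>x\<in>K. (\<Sum>i<m. theta n \<gamma> \<phi> (\<xi> i) (\<eta> i) \<zeta> x) = left_act a \<zeta> x)"
    and "is_comp_adjoint \<mu> \<phi> T"
  shows "\<forall>h\<in>L2 \<mu>. AE x in \<mu>.
           (\<Sum>i<m. \<xi> i x * T (\<lambda>y. cnj (\<eta> i y) * h y) (\<phi> x)) = a x * h x"
proof
  fix h assume h: "h \<in> L2 \<mu>"
  have prob: "prob_space \<mu>" and sets_eq: "sets \<mu> = sets (restrict_space borel K)"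
    using assms(9) by (simp_all add: hutchinson_measure_def self_similar_measure_def)
  have space_eq: "space \<mu> = K"
    using sets_eq_imp_space_eq[OF sets_eq] by (simp add: space_restrict_space)
  have "0 < n"
    using assms(3) prob_space.not_empty[OF prob] space_eq by (cases n) auto
  then interpret hutchinson_space \<mu> n \<gamma>
    using assms(2,9) by (intro hutchinson_space_if_hutchinson_measure)
      (auto simp: proper_contraction_def image_subset_iff)
  have \<phi>: "\<phi> \<in> \<mu> \<rightarrow>\<^sub>M \<mu>"
    using measurable_continuous_self_map[OF sets_eq assms(4,5)] .
  have "AE x in \<mu>. T (\<lambda>y. cnj (\<eta> i y) * h y) (\<phi> x) = bimod_inner n \<gamma> (\<eta> i) h (\<phi> x)"
    if "i < m" for i
  proof -
    have "continuous_on K (\<lambda>y. cnj (\<eta> i y))"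
      using assms(11) that by (auto intro: continuous_intros)
    then show ?thesis
      using comp_comp_adjoint_eq_average[OF \<phi> _ assms(13) L2_mult_continuous[OF sets_eq assms(1) _ h]]
        assms(6) space_eq by (simp add: bimod_inner_def)
  qed
  then have "AE x in \<mu>. \<forall>i<m. T (\<lambda>y. cnj (\<eta> i y) * h y) (\<phi> x) = bimod_inner n \<gamma> (\<eta> i) h (\<phi> x)"
    by (subst AE_all_countable) auto
  moreover have "AE x in \<mu>. x \<in> K"
    by (rule AE_I2) (simp add: space_eq)
  ultimately show "AE x in \<mu>. (\<Sum>i<m. \<xi> i x * T (\<lambda>y. cnj (\<eta> i y) * h y) (\<phi> x)) = a x * h x"
  proof eventually_elim
    case (elim x)
    then show ?case
      using sum_theta_eq_left_act_all[OF assms(12), of x h]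
      by (simp add: theta_def right_act_def left_act_def)
  qed
qed

end
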